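(* Let $n\ge 1$ and $\ell\ge 0$ be integers. Let $\mathbf{M}_0,\mathbf{M}_1,\ldots,\mathbf{M}_\ell$ be $n\times n$ matrices with entries in $\{0,1\}$, let $\pi_{0,0}=1$, and let $\pi_{1,0},\ldots,\pi_{\ell,0}$ be real numbers with $0<\pi_{k,0}\le 1$ for $1\le k\le \ell$. Define $n\times n$ matrices $\mathbf{Q}_0,\ldots,\mathbf{Q}_\ell$ recursively by $$\mathbf{Q}_0=\mathbf{M}_0,\qquad \mathbf{Q}_k=\mathbf{Q}_{k-1}+\pi_{k,0}\big((\mathbf{J}^{(n)}-\mathbf{Q}_{k-1})\circ \mathbf{M}_k\big)\quad (k=1,\ldots,\ell),$$ where $\mathbf{J}^{(n)}$ is the $n\times n$ all-ones matrix and $\circ$ denotes the Hadamard (entrywise) product. Then for all $1\le i,j\le n$: (a) $0\le \mathbf{Q}_k(i,j)\le 1$ for all $0\le k\le \ell$; (b) $\mathbf{Q}_k(i,j)\ge \mathbf{Q}_{k-1}(i,j)$ for all $1\le k\le \ell$; (c) $\mathbf{Q}_\ell(i,j)=0$ if and only if $\mathbf{M}_k(i,j)=0$ for all $0\le k\le \ell$; (d) $\mathbf{Q}_\ell(i,j)=1$ if and only if there exists $k$ with $0\le k\le \ell$ such that $\mathbf{M}_k(i,j)=1$ and $\pi_{k,0}=1$; in particular, if $\mathbf{M}_0(i,j)=1$ then $\mathbf{Q}_\ell(i,j)=1$.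
   Context: Interpretation (not needed for the statement): there are $n$ users of a social network and skills $s_0,\ldots,s_\ell$, with $s_0$ the main skill; $\mathbf{M}_k$ is the adjacency matrix of the endorsement digraph for skill $s_k$ ($\mathbf{M}_k(i,j)=1$ iff user $i$ endorses user $j$ for $s_k$), and $\pi_{k,0}$ is the probability that a person skilled in $s_k$ also possesses $s_0$ (entries of the skill deduction matrix, with $\pi_{k,k}=1$). The skills $s_1,\ldots,s_\ell$ are exactly those other skills with $\pi_{k,0}>0$. $\mathbf{Q}_\ell$ is the weighted endorsement matrix for $s_0$ after endorsement deduction. *)

theory Defs
  imports Complex_Main
begin

text \<open>An n x n real matrix is represented as a function nat => nat => real, of which
only the entries (i,j) with 1 <= i,j <= n are relevant. The family M_0,...,M_l is
represented as M :: nat => nat => nat => real with M k i j = M_k(i,j), and the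
probabilities pi_{k,0} as p :: nat => real.\<close>

definition all_ones :: "nat \<Rightarrow> nat \<Rightarrow> real" where
  "all_ones = (\<lambda>i j. 1)"

definition hadamard :: "(nat \<Rightarrow> nat \<Rightarrow> real) \<Rightarrow> (nat \<Rightarrow> nat \<Rightarrow> real) \<Rightarrow> (nat \<Rightarrow> nat \<Rightarrow> real)" where
  "hadamard A B = (\<lambda>i j. A i j * B i j)"

primrec deduced_endorsement ::
  "(nat \<Rightarrow> nat \<Rightarrow> nat \<Rightarrow> real) \<Rightarrow> (nat \<Rightarrow> real) \<Rightarrow> nat \<Rightarrow> nat \<Rightarrow> nat \<Rightarrow> real" where
  "deduced_endorsement M p 0 = M 0"
| "deduced_endorsement M p (Suc k) =
     (\<lambda>i j. deduced_endorsement M p k i j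
        + p (Suc k) * hadamard (\<lambda>a b. all_ones a b - deduced_endorsement M p k a b) (M (Suc k)) i j)"

end

theory Submission
  imports Defs
begin

text \<open>Entrywise, \<open>1 - Q\<^sub>k\<close> is the product of the factors \<open>1 - \<pi>\<^sub>t M\<^sub>t\<close> for \<open>t \<le> k\<close>,
  i.e. the probability that none of the skills \<open>s\<^sub>0, \<dots>, s\<^sub>k\<close> yields the endorsement.
  Each factor lies in \<open>[0, 1]\<close>, vanishes iff \<open>M\<^sub>t = 1\<close> and \<open>\<pi>\<^sub>t = 1\<close>, and equals \<open>1\<close>
  iff \<open>M\<^sub>t = 0\<close>; all four claims are statements about such products.\<close>

lemma one_minus_deduced_endorsement_eq_prod:
  assumes "p 0 = 1"
  shows "1 - deduced_endorsement M p k i j = (\<Prod>t\<le>k. 1 - p t * M t i j)"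
proof (induction k)
  case 0
  then show ?case using assms by simp
next
  case (Suc k)
  have "1 - deduced_endorsement M p (Suc k) i j
        = (1 - deduced_endorsement M p k i j) * (1 - p (Suc k) * M (Suc k) i j)"
    by (simp add: hadamard_def all_ones_def algebra_simps)
  then show ?case using Suc by simp
qed

lemma prod_unit_interval_eq_one_iff:
  fixes f :: "'a \<Rightarrow> real"
  assumes "finite A" and "\<And>x. x \<in> A \<Longrightarrow> 0 \<le> f x \<and> f x \<le> 1"
  shows "(\<Prod>x\<in>A. f x) = 1 \<longleftrightarrow> (\<forall>x\<in>A. f x = 1)"
  using assms
proof (induction A rule: finite_induct)
  case empty
  then show ?case by simp
next
  case (insert a A)
  have P: "0 \<le> (\<Prod>x\<in>A. f x)" "(\<Prod>x\<in>A. f x) \<le> 1"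
    using insert.prems by (auto intro: prod_nonneg prod_le_1)
  have fa: "0 \<le> f a" "f a \<le> 1" using insert.prems by auto
  have "f a * (\<Prod>x\<in>A. f x) = 1 \<longleftrightarrow> f a = 1 \<and> (\<Prod>x\<in>A. f x) = 1"
  proof
    assume prod1: "f a * (\<Prod>x\<in>A. f x) = 1"
    have "f a * (\<Prod>x\<in>A. f x) \<le> f a" "f a * (\<Prod>x\<in>A. f x) \<le> (\<Prod>x\<in>A. f x)"
      using P fa by (auto intro: mult_left_le mult_left_le_one_le)
    then show "f a = 1 \<and> (\<Prod>x\<in>A. f x) = 1" using prod1 P fa by linarith
  qed simp
  then show ?case using insert by simp
qed

lemma deduction_factor_properties:
  fixes m \<pi> :: real
  assumes "m \<in> {0, 1}" and "0 < \<pi>" and "\<pi> \<le> 1"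
  shows "0 \<le> 1 - \<pi> * m" and "1 - \<pi> * m \<le> 1"
    and "1 - \<pi> * m = 0 \<longleftrightarrow> m = 1 \<and> \<pi> = 1"
    and "1 - \<pi> * m = 1 \<longleftrightarrow> m = 0"
  using assms by auto

lemma deduced_endorsement_entry:
  assumes p0: "p 0 = 1"
    and M01: "\<And>t. t \<le> l \<Longrightarrow> M t i j \<in> {0, 1}"
    and p01: "\<And>t. t \<le> l \<Longrightarrow> 0 < p t \<and> p t \<le> 1"
  defines "Q k \<equiv> deduced_endorsement M p k i j"
  shows "\<forall>k \<le> l. 0 \<le> Q k \<and> Q k \<le> 1"
    and "\<forall>k. 1 \<le> k \<and> k \<le> l \<longrightarrow> Q (k - 1) \<le> Q k"
    and "Q l = 0 \<longleftrightarrow> (\<forall>k \<le> l. M k i j = 0)"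
    and "Q l = 1 \<longleftrightarrow> (\<exists>k \<le> l. M k i j = 1 \<and> p k = 1)"
proof -
  define f where "f t = 1 - p t * M t i j" for t
  have Q_prod: "Q k = 1 - (\<Prod>t\<le>k. f t)" for k
    using one_minus_deduced_endorsement_eq_prod[where p = p and M = M and k = k and i = i and j = j,
        OF p0]
    unfolding Q_def f_def by linarith
  note factor = deduction_factor_properties[OF M01 conjunct1[OF p01] conjunct2[OF p01]]
  have f01: "t \<le> l \<Longrightarrow> 0 \<le> f t \<and> f t \<le> 1" for t
    using factor(1,2) unfolding f_def by blast
  have prod01: "0 \<le> (\<Prod>t\<le>k. f t) \<and> (\<Prod>t\<le>k. f t) \<le> 1" if "k \<le> l" for k
    using f01 that by (auto intro!: prod_nonneg prod_le_1)
  show "\<forall>k \<le> l. 0 \<le> Q k \<and> Q k \<le> 1"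
    using prod01 Q_prod by auto
  show "\<forall>k. 1 \<le> k \<and> k \<le> l \<longrightarrow> Q (k - 1) \<le> Q k"
  proof (intro allI impI)
    fix k assume k: "1 \<le> k \<and> k \<le> l"
    then obtain m where m: "k = Suc m" by (cases k) auto
    have "(\<Prod>t\<le>k. f t) = (\<Prod>t\<le>m. f t) * f k" using m by simp
    also have "\<dots> \<le> (\<Prod>t\<le>m. f t)"
      using prod01[of m] f01[of k] k m by (simp add: mult_left_le)
    finally show "Q (k - 1) \<le> Q k" using Q_prod m by simp
  qed
  have "Q l = 0 \<longleftrightarrow> (\<forall>t\<le>l. f t = 1)"
    using prod_unit_interval_eq_one_iff[of "{..l}" f] f01 Q_prod by auto
  then show "Q l = 0 \<longleftrightarrow> (\<forall>k \<le> l. M k i j = 0)"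
    using factor(4) unfolding f_def by auto
  have "Q l = 1 \<longleftrightarrow> (\<exists>t\<le>l. f t = 0)"
    using Q_prod by auto
  then show "Q l = 1 \<longleftrightarrow> (\<exists>k \<le> l. M k i j = 1 \<and> p k = 1)"
    using factor(3) unfolding f_def by auto
qed

theorem proposition1:
  fixes n l :: nat
    and M :: "nat \<Rightarrow> nat \<Rightarrow> nat \<Rightarrow> real"
    and p :: "nat \<Rightarrow> real"
  assumes "n \<ge> 1"
    and M01: "\<And>k i j. k \<le> l \<Longrightarrow> i \<in> {1..n} \<Longrightarrow> j \<in> {1..n} \<Longrightarrow> M k i j \<in> {0, 1}"
    and p0: "p 0 = 1"
    and pk: "\<And>k. 1 \<le> k \<Longrightarrow> k \<le> l \<Longrightarrow> 0 < p k \<and> p k \<le> 1"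
  shows "\<forall>i \<in> {1..n}. \<forall>j \<in> {1..n}.
      (\<forall>k \<le> l. 0 \<le> deduced_endorsement M p k i j \<and> deduced_endorsement M p k i j \<le> 1)
    \<and> (\<forall>k. 1 \<le> k \<and> k \<le> l \<longrightarrow> deduced_endorsement M p k i j \<ge> deduced_endorsement M p (k - 1) i j)
    \<and> (deduced_endorsement M p l i j = 0 \<longleftrightarrow> (\<forall>k \<le> l. M k i j = 0))
    \<and> (deduced_endorsement M p l i j = 1 \<longleftrightarrow> (\<exists>k \<le> l. M k i j = 1 \<and> p k = 1))
    \<and> (M 0 i j = 1 \<longrightarrow> deduced_endorsement M p l i j = 1)"
proof -
  have p01: "0 < p t \<and> p t \<le> 1" if "t \<le> l" for t
    using pk[of t] p0 that by (cases "t = 0") auto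
  show ?thesis
  proof (intro ballI)
    fix i j assume "i \<in> {1..n}" "j \<in> {1..n}"
    note entry = deduced_endorsement_entry[where p = p and M = M and i = i and j = j,
        OF p0 M01[OF _ this] p01]
    from entry(4) p0 have "M 0 i j = 1 \<longrightarrow> deduced_endorsement M p l i j = 1"
      by auto
    with entry(1-4) show "(\<forall>k \<le> l. 0 \<le> deduced_endorsement M p k i j \<and> deduced_endorsement M p k i j \<le> 1)
      \<and> (\<forall>k. 1 \<le> k \<and> k \<le> l \<longrightarrow> deduced_endorsement M p k i j \<ge> deduced_endorsement M p (k - 1) i j)
      \<and> (deduced_endorsement M p l i j = 0 \<longleftrightarrow> (\<forall>k \<le> l. M k i j = 0))
      \<and> (deduced_endorsement M p l i j = 1 \<longleftrightarrow> (\<exists>k \<le> l. M k i j = 1 \<and> p k = 1))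
      \<and> (M 0 i j = 1 \<longrightarrow> deduced_endorsement M p l i j = 1)"
      by blast
  qed
qed

end
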